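(* For any $C<\infty$, $$\mathbf P\Big(I^{[-n,n]\times\{0\}}_1\nsubseteq[-n-\log n,\,n+\log n]\times[0,\log n]\Big)<\frac{1}{n^{C}}$$ for all sufficiently large $n$.
   Context: $\mathbb{H}=\{(x_1,x_2)\in\mathbb{Z}^2:x_2\ge0\}$. To each directed nearest-neighbour edge $x\to y$ in $\mathbb{H}$ attach an independent Poisson process $N^{x\to y}$ of intensity $\max(\sqrt{x_2},1)$. For $x\in\mathbb{H}$ and $t\ge0$, $I^x_t$ is the set of $y\in\mathbb{H}$ such that there are a nearest-neighbour path $x=y_0,y_1,\dots,y_m=y$ in $\mathbb{H}$ ($m\ge0$) and times $0<s_1<\dots<s_m\le t$ with $N^{y_{i-1}\to y_i}$ having an arrival at time $s_i$ for each $i$. For $V\subset\mathbb{H}$, $I^V_t=\bigcup_{x\in V}I^x_t$ (this is the interface process started from $V$, in which each occupied site $x$ tries to occupy each neighbour at rate $\max(\sqrt{x_2},1)$). *)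

theory Defs
  imports "HOL-Probability.Probability"
begin

type_synonym site = "int \<times> int"
type_synonym edge = "site \<times> site"

definition Hplane :: "site set" where
  "Hplane = {x. snd x \<ge> 0}"

definition nn :: "site \<Rightarrow> site \<Rightarrow> bool" where
  "nn x y \<longleftrightarrow> x \<in> Hplane \<and> y \<in> Hplane \<and> \<bar>fst x - fst y\<bar> + \<bar>snd x - snd y\<bar> = 1"

definition edges :: "edge set" where
  "edges = {(x, y). nn x y}"

definition rate :: "site \<Rightarrow> real" where
  "rate x = max (sqrt (real_of_int (snd x))) 1"

text \<open>Poisson processes realised through their i.i.d. exponential inter-arrival
  times: T e k is the (k+1)-st inter-arrival time of the process on edge e,
  and the arrival times are the partial sums.\<close>
definition arrivals :: "(edge \<Rightarrow> nat \<Rightarrow> 'a \<Rightarrow> real) \<Rightarrow> edge \<Rightarrow> 'a \<Rightarrow> real set" where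
  "arrivals T e \<omega> = range (\<lambda>k. \<Sum>j\<le>k. T e j \<omega>)"

definition poisson_edge_processes :: "'a measure \<Rightarrow> (edge \<Rightarrow> nat \<Rightarrow> 'a \<Rightarrow> real) \<Rightarrow> bool" where
  "poisson_edge_processes M T \<longleftrightarrow>
     prob_space M \<and>
     prob_space.indep_vars M (\<lambda>_. borel) (\<lambda>(e, k). T e k) (edges \<times> UNIV) \<and>
     (\<forall>e\<in>edges. \<forall>k. distributed M lborel (T e k)
         (\<lambda>s. ennreal (exponential_density (rate (fst e)) s)))"

definition infected :: "(edge \<Rightarrow> nat \<Rightarrow> 'a \<Rightarrow> real) \<Rightarrow> site set \<Rightarrow> real \<Rightarrow> 'a \<Rightarrow> site set" where
  "infected T V t \<omega> = {y. \<exists>x\<in>V. \<exists>ps ss.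
      length ps = Suc (length ss) \<and> hd ps = x \<and> last ps = y \<and>
      sorted_wrt (<) ss \<and>
      (\<forall>i<length ss. nn (ps ! i) (ps ! Suc i) \<and> 0 < ss ! i \<and> ss ! i \<le> t \<and>
          ss ! i \<in> arrivals T (ps ! i, ps ! Suc i) \<omega>)}"

end

theory Submission
  imports Defs "HOL-Real_Asymp.Real_Asymp"
begin

(* If a site outside the box is infected by time 1, loop erasure gives a self-avoiding
   nearest-neighbour path starting in [-n, n] x {0} whose edges fire at increasing times in
   (0, 1]; as no walk of at most ln n steps leaves the box, the path has at least L = floor (ln n)
   steps. Recording for each of the first L firing times its cell (j/L, (j+1)/L] gives a weakly
   increasing sequence of cell indices. There are at most (2n+1) 4^L such paths and 4^L such
   sequences. The path stays below height L, so all rates are at most sqrt L, and distinct edges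
   carry independent processes: each pair (path, sequence) has probability at most (sqrt L / L)^L.
   The union bound (2n+1) (16 / sqrt L)^L decays faster than any power of n. *)

section \<open>Arrivals of the edge processes\<close>

lemma erlang_density_sums:
  assumes "0 < l" "0 \<le> x"
  shows "(\<lambda>k. erlang_density k l x) sums l"
proof -
  have density: "erlang_density k l x = l * exp (- l * x) * ((l * x) ^ k /\<^sub>R fact k)" for k
    using assms by (simp add: erlang_density_def power_mult_distrib field_simps)
  have "(\<lambda>k. erlang_density k l x) sums (l * exp (- l * x) * exp (l * x))"
    unfolding density by (intro sums_mult exp_converges)
  then show ?thesis
    by (simp add: mult.assoc flip: exp_add)
qed

lemma (in prob_space) emeasure_exponential_arrival_in_Ioc_le:
  fixes X :: "nat \<Rightarrow> 'a \<Rightarrow> real"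
  assumes indep: "indep_vars (\<lambda>_. borel) X UNIV"
    and "\<And>k. distributed M lborel (X k) (exponential_density l)"
    and "0 < l" "0 \<le> a" "a \<le> b"
  shows "emeasure M {\<omega> \<in> space M. \<exists>k. (\<Sum>j\<le>k. X j \<omega>) \<in> {a<..b}} \<le> ennreal (l * (b - a))"
proof -
  have sum_distr: "distributed M lborel (\<lambda>\<omega>. \<Sum>j\<le>k. X j \<omega>) (erlang_density k l)" for k
    using exponential_distributed_sum[of "{..k}" l X] assms indep_vars_subset[OF indep]
    by simp
  have [measurable]: "(\<lambda>\<omega>. \<Sum>j\<le>k. X j \<omega>) \<in> borel_measurable M" for k
    using distributed_measurable[OF sum_distr] by simp
  have "emeasure M {\<omega> \<in> space M. \<exists>k. (\<Sum>j\<le>k. X j \<omega>) \<in> {a<..b}}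
      = emeasure M (\<Union>k. (\<lambda>\<omega>. \<Sum>j\<le>k. X j \<omega>) -` {a<..b} \<inter> space M)"
    by (intro arg_cong[where f = "emeasure M"]) auto
  also have "\<dots> \<le> (\<Sum>k. emeasure M ((\<lambda>\<omega>. \<Sum>j\<le>k. X j \<omega>) -` {a<..b} \<inter> space M))"
    by (rule emeasure_subadditive_countably) auto
  also have "\<dots> = (\<Sum>k. \<integral>\<^sup>+x. ennreal (erlang_density k l x) * indicator {a<..b} x \<partial>lborel)"
    by (intro suminf_cong distributed_emeasure[OF sum_distr]) simp
  also have "\<dots> = (\<integral>\<^sup>+x. (\<Sum>k. ennreal (erlang_density k l x) * indicator {a<..b} x) \<partial>lborel)"
    by (rule nn_integral_suminf[symmetric]) simp
  also have "\<dots> = (\<integral>\<^sup>+x. ennreal l * indicator {a<..b} x \<partial>lborel)"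
  proof (rule nn_integral_cong)
    fix x :: real
    have "(\<Sum>k. ennreal (erlang_density k l x)) = ennreal l" if "0 \<le> x"
      using erlang_density_sums[OF \<open>0 < l\<close> that] \<open>0 < l\<close> by (simp add: suminf_ennreal2 sums_iff)
    then show "(\<Sum>k. ennreal (erlang_density k l x) * indicator {a<..b} x) = ennreal l * indicator {a<..b} x"
      using \<open>0 \<le> a\<close> by (cases "x \<in> {a<..b}") auto
  qed
  also have "\<dots> = ennreal (l * (b - a))"
    using assms by (simp add: nn_integral_cmult_indicator ennreal_mult)
  finally show ?thesis .
qed

lemma rate_ge_1: "1 \<le> rate x"
  by (simp add: rate_def)

lemma arrivals_meet_iff: "arrivals T e \<omega> \<inter> I \<noteq> {} \<longleftrightarrow> (\<exists>k. (\<Sum>j\<le>k. T e j \<omega>) \<in> I)"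
  by (auto simp: arrivals_def)

context
  fixes M :: "'a measure" and T :: "edge \<Rightarrow> nat \<Rightarrow> 'a \<Rightarrow> real"
  assumes processes: "poisson_edge_processes M T"
begin

interpretation prob_space M
  using processes by (simp add: poisson_edge_processes_def)

lemma indep_edge_processes: "indep_vars (\<lambda>_. borel) (\<lambda>(e, k). T e k) (edges \<times> UNIV)"
  using processes by (simp add: poisson_edge_processes_def)

lemma borel_measurable_edge_process: "e \<in> edges \<Longrightarrow> T e k \<in> borel_measurable M"
  using indep_edge_processes unfolding indep_vars_def by auto

lemma indep_vars_edge_process:
  assumes "e \<in> edges"
  shows "indep_vars (\<lambda>_. borel) (T e) UNIV"
proof -
  have "indep_vars (\<lambda>k. PiM {(e, k)} (\<lambda>_. borel)) (\<lambda>k \<omega>. restrict (\<lambda>p. (\<lambda>(e, k). T e k) p \<omega>) {(e, k)}) UNIV"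
    using assms by (intro indep_vars_restrict[OF indep_edge_processes]) (auto simp: disjoint_family_on_def)
  then have "indep_vars (\<lambda>_. borel) (\<lambda>k \<omega>. restrict (\<lambda>p. (\<lambda>(e, k). T e k) p \<omega>) {(e, k)} (e, k)) UNIV"
    by (rule indep_vars_compose2) auto
  then show ?thesis
    by simp
qed

lemma emeasure_arrival_in_Ioc_le:
  assumes "e \<in> edges" "0 \<le> a" "a \<le> b"
  shows "emeasure M {\<omega> \<in> space M. arrivals T e \<omega> \<inter> {a<..b} \<noteq> {}} \<le> ennreal (rate (fst e) * (b - a))"
  unfolding arrivals_meet_iff
proof (rule emeasure_exponential_arrival_in_Ioc_le[OF indep_vars_edge_process[OF \<open>e \<in> edges\<close>]])
  show "distributed M lborel (T e k) (exponential_density (rate (fst e)))" for k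
    using processes \<open>e \<in> edges\<close> by (simp add: poisson_edge_processes_def)
qed (use assms rate_ge_1[of "fst e"] in auto)

lemma prob_arrivals_in_Ioc_le:
  assumes "finite J" "inj_on E J" "E ` J \<subseteq> edges" and ab: "\<And>i. i \<in> J \<Longrightarrow> 0 \<le> a i \<and> a i \<le> b i"
  shows "prob {\<omega> \<in> space M. \<forall>i\<in>J. arrivals T (E i) \<omega> \<inter> {a i<..b i} \<noteq> {}}
    \<le> (\<Prod>i\<in>J. rate (fst (E i)) * (b i - a i))"
proof (cases "J = {}")
  case True
  then show ?thesis by simp
next
  case False
  define K where "K i = {E i} \<times> (UNIV :: nat set)" for i
  define X where "X i \<omega> = restrict (\<lambda>p. (\<lambda>(e, k). T e k) p \<omega>) (K i)" for i \<omega>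
  define A where "A i = {f \<in> space (PiM (K i) (\<lambda>_. borel)). \<exists>k. (\<Sum>j\<le>k. f (E i, j)) \<in> {a i<..b i}}" for i
  have indep: "indep_vars (\<lambda>i. PiM (K i) (\<lambda>_. borel)) X J"
    unfolding X_def using assms
    by (intro indep_vars_restrict[OF indep_edge_processes]) (auto simp: K_def disjoint_family_on_def inj_on_def)
  have A: "A i \<in> sets (PiM (K i) (\<lambda>_. borel))" for i
  proof -
    have [measurable]: "(\<lambda>f. f (E i, j)) \<in> borel_measurable (PiM (K i) (\<lambda>_. borel :: real measure))" for j
      by (rule measurable_component_singleton) (simp add: K_def)
    show ?thesis unfolding A_def by measurable
  qed
  have event: "X i -` A i \<inter> space M = {\<omega> \<in> space M. arrivals T (E i) \<omega> \<inter> {a i<..b i} \<noteq> {}}" for i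
    by (auto simp: X_def A_def K_def space_PiM PiE_def extensional_def arrivals_meet_iff)
  have "prob {\<omega> \<in> space M. \<forall>i\<in>J. arrivals T (E i) \<omega> \<inter> {a i<..b i} \<noteq> {}} = prob (\<Inter>i\<in>J. X i -` A i \<inter> space M)"
    unfolding event using False by (intro arg_cong[where f = prob]) auto
  also have "\<dots> = (\<Prod>i\<in>J. prob (X i -` A i \<inter> space M))"
    using False \<open>finite J\<close> A by (intro indep_varsD[OF indep]) auto
  also have "\<dots> \<le> (\<Prod>i\<in>J. rate (fst (E i)) * (b i - a i))"
  proof (rule prod_mono)
    fix i assume "i \<in> J"
    have "emeasure M (X i -` A i \<inter> space M) \<le> ennreal (rate (fst (E i)) * (b i - a i))"
      unfolding event using assms \<open>i \<in> J\<close> by (intro emeasure_arrival_in_Ioc_le) auto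
    moreover have "0 \<le> rate (fst (E i)) * (b i - a i)"
      using ab[OF \<open>i \<in> J\<close>] rate_ge_1[of "fst (E i)"] by simp
    ultimately show "0 \<le> prob (X i -` A i \<inter> space M) \<and> prob (X i -` A i \<inter> space M) \<le> rate (fst (E i)) * (b i - a i)"
      by (simp add: emeasure_eq_measure)
  qed
  finally show ?thesis .
qed

end

section \<open>Timed walks and loop erasure\<close>

definition timed_walk :: "('v \<Rightarrow> 'v \<Rightarrow> 't::linorder \<Rightarrow> bool) \<Rightarrow> 'v list \<Rightarrow> 't list \<Rightarrow> bool" where
  "timed_walk P ps ss \<longleftrightarrow> length ps = Suc (length ss) \<and> sorted_wrt (<) ss \<and>
     (\<forall>i<length ss. P (ps ! i) (ps ! Suc i) (ss ! i))"

lemma timed_walk_Nil: "timed_walk P ps [] \<longleftrightarrow> (\<exists>x. ps = [x])"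
  by (auto simp: timed_walk_def length_Suc_conv)

lemma timed_walk_Cons:
  "timed_walk P (x # ps) (s # ss) \<longleftrightarrow> P x (hd ps) s \<and> (\<forall>t\<in>set ss. s < t) \<and> timed_walk P ps ss"
  by (cases ps) (auto simp: timed_walk_def less_Suc_eq_0_disj)

lemma timed_walk_drop:
  assumes "timed_walk P ps ss" "k \<le> length ss"
  shows "timed_walk P (drop k ps) (drop k ss)"
  using assms by (auto simp: timed_walk_def sorted_wrt_drop)

lemma timed_walk_take:
  assumes "timed_walk P ps ss" "k \<le> length ss"
  shows "timed_walk P (take (Suc k) ps) (take k ss)"
  using assms by (auto simp: timed_walk_def sorted_wrt_take min_def)

lemma timed_walk_loop_erasure:
  assumes "timed_walk P ps ss"
  shows "\<exists>ps' ss'. timed_walk P ps' ss' \<and> hd ps' = hd ps \<and> last ps' = last ps \<and> distinct ps' \<and> set ss' \<subseteq> set ss"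
  using assms
proof (induction ss arbitrary: ps)
  case Nil
  then show ?case
    by (auto simp: timed_walk_Nil)
next
  case (Cons s ss)
  then obtain x ps0 where ps: "ps = x # ps0"
    by (cases ps) (auto simp: timed_walk_def)
  with Cons.prems have step: "P x (hd ps0) s" and later: "\<forall>t\<in>set ss. s < t" and rest: "timed_walk P ps0 ss"
    by (simp_all add: timed_walk_Cons)
  have "ps0 \<noteq> []"
    using rest by (auto simp: timed_walk_def)
  obtain qs ts where qs: "timed_walk P qs ts" "hd qs = hd ps0" "last qs = last ps0" "distinct qs"
    and ts: "set ts \<subseteq> set ss"
    using Cons.IH[OF rest] by blast
  show ?case
  proof (cases "x \<in> set qs")
    case True
    \<comment> \<open>\<open>x\<close> reappears on the erased tail: start the walk there\<close>
    then obtain k where k: "k < length qs" "qs ! k = x"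
      by (auto simp: in_set_conv_nth)
    then have "timed_walk P (drop k qs) (drop k ts)"
      using qs(1) by (intro timed_walk_drop) (auto simp: timed_walk_def)
    moreover have "hd (drop k qs) = hd ps" "last (drop k qs) = last ps"
      using k qs(3) \<open>ps0 \<noteq> []\<close> by (auto simp: ps hd_drop_conv_nth)
    moreover have "set (drop k ts) \<subseteq> set (s # ss)"
      using ts set_drop_subset by fastforce
    ultimately show ?thesis
      using qs(4) by (intro exI[of _ "drop k qs"] exI[of _ "drop k ts"]) auto
  next
    case False
    have "timed_walk P (x # qs) (s # ts)"
      using step later ts qs by (auto simp: timed_walk_Cons)
    moreover have "last (x # qs) = last ps"
      using qs \<open>ps0 \<noteq> []\<close> by (auto simp: ps timed_walk_def)
    ultimately show ?thesis
      using False qs(4) ts by (intro exI[of _ "x # qs"] exI[of _ "s # ts"]) (auto simp: ps)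
  qed
qed

section \<open>Nearest-neighbour walks in the half-plane\<close>

definition base_segment :: "nat \<Rightarrow> site set" where
  "base_segment n = {(a, 0) | a. - int n \<le> a \<and> a \<le> int n}"

definition box :: "nat \<Rightarrow> real \<Rightarrow> site set" where
  "box n r = {(a, b). - real n - r \<le> real_of_int a \<and> real_of_int a \<le> real n + r
                      \<and> 0 \<le> real_of_int b \<and> real_of_int b \<le> r}"

definition walks :: "site set \<Rightarrow> nat \<Rightarrow> site list set" where
  "walks V L = {ps. length ps = Suc L \<and> hd ps \<in> V \<and> (\<forall>i<L. nn (ps ! i) (ps ! Suc i))}"

lemma walks_nth_dist_le:
  assumes "ps \<in> walks V L" "i \<le> L"
  shows "\<bar>fst (ps ! i) - fst (ps ! 0)\<bar> \<le> int i \<and> \<bar>snd (ps ! i) - snd (ps ! 0)\<bar> \<le> int i"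
  using assms(2)
proof (induction i)
  case (Suc i)
  then have "nn (ps ! i) (ps ! Suc i)"
    using assms(1) by (simp add: walks_def)
  with Suc show ?case
    by (auto simp: nn_def)
qed simp

lemma walks_last_in_box:
  assumes "ps \<in> walks (base_segment n) m" "real m \<le> r"
  shows "last ps \<in> box n r"
proof -
  obtain a where a: "ps ! 0 = (a, 0)" "- int n \<le> a" "a \<le> int n"
    using assms(1) by (cases ps) (auto simp: walks_def base_segment_def)
  have "length ps = Suc m"
    using assms(1) by (simp add: walks_def)
  then have last: "last ps = ps ! m"
    by (cases ps rule: rev_cases) (auto simp: nth_append)
  have "0 \<le> snd (ps ! m)"
  proof (cases m)
    case (Suc k)
    then have "nn (ps ! k) (ps ! m)"
      using assms(1) by (simp add: walks_def)
    then show ?thesis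
      by (simp add: nn_def Hplane_def)
  qed (use a in simp)
  moreover have "\<bar>fst (ps ! m) - a\<bar> \<le> int m" "snd (ps ! m) \<le> int m"
    using walks_nth_dist_le[OF assms(1), of m] a by auto
  ultimately have "real_of_int \<bar>fst (ps ! m) - a\<bar> \<le> real_of_int (int m)"
    "real_of_int 0 \<le> real_of_int (snd (ps ! m))" "real_of_int (snd (ps ! m)) \<le> real_of_int (int m)"
    "real_of_int (- int n) \<le> real_of_int a" "real_of_int a \<le> real_of_int (int n)"
    using a by (simp_all only: of_int_le_iff)
  then show ?thesis
    using assms(2) unfolding last box_def by (cases "ps ! m") (auto simp: abs_le_iff)
qed

definition unit_steps :: "site set" where
  "unit_steps = {(1, 0), (-1, 0), (0, 1), (0, -1)}"

fun walk_of :: "site \<Rightarrow> site list \<Rightarrow> site list" where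
  "walk_of x [] = [x]"
| "walk_of x (d # ds) = x # walk_of (fst x + fst d, snd x + snd d) ds"

lemma nn_imp_unit_step:
  assumes "nn x y"
  shows "(fst y - fst x, snd y - snd x) \<in> unit_steps"
  using assms by (auto simp: nn_def unit_steps_def abs_if split: if_splits)

lemma walk_eq_walk_of:
  assumes "length ps = Suc L" "\<forall>i<L. nn (ps ! i) (ps ! Suc i)"
  shows "\<exists>ds. length ds = L \<and> set ds \<subseteq> unit_steps \<and> ps = walk_of (hd ps) ds"
  using assms
proof (induction L arbitrary: ps)
  case 0
  then obtain x where "ps = [x]"
    by (auto simp: length_Suc_conv)
  then show ?case
    by simp
next
  case (Suc L)
  obtain x y qs where ps: "ps = x # y # qs"
    using Suc.prems(1) by (auto simp: length_Suc_conv)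
  have "nn x y"
    using Suc.prems(2)[rule_format, of 0] ps by simp
  have "length (y # qs) = Suc L"
    using Suc.prems(1) ps by simp
  moreover have "\<forall>i<L. nn ((y # qs) ! i) ((y # qs) ! Suc i)"
    using Suc.prems(2) ps by (auto simp flip: nth_Cons_Suc)
  ultimately obtain ds where "length ds = L" "set ds \<subseteq> unit_steps" "y # qs = walk_of y ds"
    using Suc.IH[of "y # qs"] by auto
  then show ?case
    using nn_imp_unit_step[OF \<open>nn x y\<close>] ps
    by (intro exI[of _ "(fst y - fst x, snd y - snd x) # ds"]) simp
qed

lemma walks_subset_image_walk_of:
  "walks V L \<subseteq> (\<lambda>(x, ds). walk_of x ds) ` (V \<times> {ds. set ds \<subseteq> unit_steps \<and> length ds = L})"
proof
  fix ps
  assume "ps \<in> walks V L"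
  then have "length ps = Suc L" "\<forall>i<L. nn (ps ! i) (ps ! Suc i)" "hd ps \<in> V"
    by (simp_all add: walks_def)
  moreover obtain ds where "length ds = L" "set ds \<subseteq> unit_steps" "ps = walk_of (hd ps) ds"
    using walk_eq_walk_of[OF calculation(1,2)] by blast
  ultimately show "ps \<in> (\<lambda>(x, ds). walk_of x ds) ` (V \<times> {ds. set ds \<subseteq> unit_steps \<and> length ds = L})"
    by (intro image_eqI[of _ _ "(hd ps, ds)"]) auto
qed

lemma finite_walks: "finite V \<Longrightarrow> finite (walks V L)"
  by (rule finite_subset[OF walks_subset_image_walk_of])
    (auto intro!: finite_cartesian_product finite_lists_length_eq simp: unit_steps_def)

lemma card_walks_le:
  assumes "finite V"
  shows "card (walks V L) \<le> card V * 4 ^ L"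
proof -
  let ?D = "V \<times> {ds. set ds \<subseteq> unit_steps \<and> length ds = L}"
  have fin: "finite ?D"
    using assms by (auto intro!: finite_cartesian_product finite_lists_length_eq simp: unit_steps_def)
  have "card (walks V L) \<le> card ((\<lambda>(x, ds). walk_of x ds) ` ?D)"
    using fin by (intro card_mono walks_subset_image_walk_of) auto
  also have "\<dots> \<le> card ?D"
    using fin by (rule card_image_le)
  also have "\<dots> = card V * card unit_steps ^ L"
    by (simp add: card_cartesian_product card_lists_length_eq unit_steps_def)
  also have "card unit_steps = 4"
    by (simp add: unit_steps_def)
  finally show ?thesis .
qed

lemma finite_base_segment: "finite (base_segment n)"
  and card_base_segment: "card (base_segment n) = 2 * n + 1"
proof -
  have eq: "base_segment n = (\<lambda>a. (a, 0)) ` {- int n..int n}"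
    by (auto simp: base_segment_def)
  show "finite (base_segment n)"
    unfolding eq by simp
  show "card (base_segment n) = 2 * n + 1"
    unfolding eq by (subst card_image) (auto simp: inj_on_def)
qed

definition sorted_lists :: "nat \<Rightarrow> nat \<Rightarrow> nat list set" where
  "sorted_lists L m = {js. length js = L \<and> sorted js \<and> set js \<subseteq> {..<m}}"

lemma finite_sorted_lists: "finite (sorted_lists L m)"
  by (rule finite_subset[of _ "{js. set js \<subseteq> {..<m} \<and> length js = L}"])
    (auto simp: sorted_lists_def finite_lists_length_eq)

lemma card_sorted_lists_le: "card (sorted_lists L m) \<le> 2 ^ (L + m)"
proof -
  \<comment> \<open>a weakly increasing list is determined by the set of its values shifted by their positions\<close>
  define code where "code js = (\<lambda>i. i + js ! i) ` {..<L}" for js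
  have strict: "sorted_wrt (<) (map (\<lambda>i. i + js ! i) [0..<L])" if "js \<in> sorted_lists L m" for js
    using that by (auto simp: sorted_lists_def sorted_wrt_iff_nth_less sorted_iff_nth_mono intro: add_less_le_mono)
  have "inj_on code (sorted_lists L m)"
  proof (rule inj_onI)
    fix js js' assume js: "js \<in> sorted_lists L m" "js' \<in> sorted_lists L m" and "code js = code js'"
    then have "set (map (\<lambda>i. i + js ! i) [0..<L]) = set (map (\<lambda>i. i + js' ! i) [0..<L])"
      by (simp add: code_def atLeast0LessThan)
    then have "map (\<lambda>i. i + js ! i) [0..<L] = map (\<lambda>i. i + js' ! i) [0..<L]"
      using strict_sorted_equal[OF strict[OF js(1)] strict[OF js(2)]] by simp
    then show "js = js'"
      using js by (intro nth_equalityI) (auto simp: sorted_lists_def map_eq_conv)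
  qed
  moreover have "i + js ! i < L + m" if "js \<in> sorted_lists L m" "i < L" for js i
  proof -
    have "i < length js" "set js \<subseteq> {..<m}"
      using that by (auto simp: sorted_lists_def)
    then have "js ! i < m"
      by (meson lessThan_iff nth_mem subsetD)
    then show ?thesis
      using \<open>i < L\<close> by simp
  qed
  then have "code ` sorted_lists L m \<subseteq> Pow {..<L + m}"
    by (auto simp: code_def)
  ultimately have "card (sorted_lists L m) \<le> card (Pow {..<L + m})"
    by (intro card_inj_on_le) auto
  then show ?thesis
    by (simp add: card_Pow)
qed

section \<open>Paths of infection\<close>

definition infection_step :: "(edge \<Rightarrow> nat \<Rightarrow> 'a \<Rightarrow> real) \<Rightarrow> real \<Rightarrow> 'a \<Rightarrow> site \<Rightarrow> site \<Rightarrow> real \<Rightarrow> bool" where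
  "infection_step T t \<omega> x y s \<longleftrightarrow> nn x y \<and> 0 < s \<and> s \<le> t \<and> s \<in> arrivals T (x, y) \<omega>"

lemma infected_iff_timed_walk:
  "y \<in> infected T V t \<omega> \<longleftrightarrow> (\<exists>ps ss. timed_walk (infection_step T t \<omega>) ps ss \<and> hd ps \<in> V \<and> last ps = y)"
  unfolding infected_def timed_walk_def infection_step_def by blast

lemma timed_walk_infection_step_in_walks:
  "timed_walk (infection_step T t \<omega>) ps ss \<Longrightarrow> hd ps \<in> V \<Longrightarrow> ps \<in> walks V (length ss)"
  by (auto simp: timed_walk_def infection_step_def walks_def)

(* Choosing arrival indices instead of arrival times makes the existential quantifier in the
   definition of infected countable. *)
definition walk_arrival_times :: "(edge \<Rightarrow> nat \<Rightarrow> 'a \<Rightarrow> real) \<Rightarrow> site list \<Rightarrow> nat list \<Rightarrow> 'a \<Rightarrow> real list" where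
  "walk_arrival_times T ps ks \<omega> = map (\<lambda>i. \<Sum>j\<le>ks ! i. T (ps ! i, ps ! Suc i) j \<omega>) [0..<length ks]"

lemma ex_timed_walk_iff_arrival_indices:
  "(\<exists>ss. timed_walk (infection_step T t \<omega>) ps ss) \<longleftrightarrow>
     (\<exists>ks. timed_walk (infection_step T t \<omega>) ps (walk_arrival_times T ps ks \<omega>))"
proof
  assume "\<exists>ss. timed_walk (infection_step T t \<omega>) ps ss"
  then obtain ss where walk: "timed_walk (infection_step T t \<omega>) ps ss" ..
  then have "\<forall>i<length ss. \<exists>k. ss ! i = (\<Sum>j\<le>k. T (ps ! i, ps ! Suc i) j \<omega>)"
    by (auto simp: timed_walk_def infection_step_def arrivals_def)
  then obtain k where k: "\<forall>i<length ss. ss ! i = (\<Sum>j\<le>k i. T (ps ! i, ps ! Suc i) j \<omega>)"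
    by metis
  have "walk_arrival_times T ps (map k [0..<length ss]) \<omega> = ss"
    using k by (intro nth_equalityI) (auto simp: walk_arrival_times_def)
  then show "\<exists>ks. timed_walk (infection_step T t \<omega>) ps (walk_arrival_times T ps ks \<omega>)"
    using walk by metis
qed blast

definition arrivals_in_cells :: "(edge \<Rightarrow> nat \<Rightarrow> 'a \<Rightarrow> real) \<Rightarrow> nat \<Rightarrow> site list \<Rightarrow> nat list \<Rightarrow> 'a \<Rightarrow> bool" where
  "arrivals_in_cells T L ps js \<omega> \<longleftrightarrow>
     (\<forall>i<L. arrivals T (ps ! i, ps ! Suc i) \<omega> \<inter> {real (js ! i) / L <.. (real (js ! i) + 1) / L} \<noteq> {})"

definition grid_cell :: "nat \<Rightarrow> real \<Rightarrow> nat" where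
  "grid_cell L s = nat \<lceil>s * L\<rceil> - 1"

lemma grid_cell_mono: "s \<le> s' \<Longrightarrow> grid_cell L s \<le> grid_cell L s'"
  unfolding grid_cell_def by (intro diff_le_mono nat_mono ceiling_mono mult_right_mono) auto

lemma grid_cell_bounds:
  assumes "0 < s" "s \<le> 1" "0 < L"
  shows "grid_cell L s < L" "s \<in> {real (grid_cell L s) / L <.. (real (grid_cell L s) + 1) / L}"
proof -
  have "0 < s * L" "s * L \<le> L"
    using assms by auto
  then have pos: "1 \<le> \<lceil>s * L\<rceil>" and le: "\<lceil>s * L\<rceil> \<le> int L"
    by (simp_all add: ceiling_le_iff)
  then have "1 \<le> nat \<lceil>s * L\<rceil>"
    by (simp add: le_nat_iff)
  then have cell: "real (grid_cell L s) = of_int \<lceil>s * L\<rceil> - 1"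
    using pos by (simp add: grid_cell_def of_nat_diff)
  have "nat \<lceil>s * L\<rceil> \<le> L"
    using le by (simp add: nat_le_iff)
  then show "grid_cell L s < L"
    using \<open>1 \<le> nat \<lceil>s * L\<rceil>\<close> unfolding grid_cell_def by linarith
  have "of_int \<lceil>s * L\<rceil> - 1 < s * L" "s * L \<le> of_int \<lceil>s * L\<rceil>"
    by (simp_all add: ceiling_correct ceiling_less_iff)
  then show "s \<in> {real (grid_cell L s) / L <.. (real (grid_cell L s) + 1) / L}"
    using assms unfolding cell by (simp add: pos_divide_less_eq pos_le_divide_eq)
qed

lemma timed_walk_arrivals_in_cells:
  assumes walk: "timed_walk (infection_step T 1 \<omega>) ps ss" and "length ss = L" "0 < L"
  shows "map (grid_cell L) ss \<in> sorted_lists L L \<and> arrivals_in_cells T L ps (map (grid_cell L) ss) \<omega>"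
proof
  have times: "0 < ss ! i \<and> ss ! i \<le> 1 \<and> ss ! i \<in> arrivals T (ps ! i, ps ! Suc i) \<omega>" if "i < L" for i
    using walk that \<open>length ss = L\<close> by (simp add: timed_walk_def infection_step_def)
  have "sorted_wrt (<) ss"
    using walk by (simp add: timed_walk_def)
  then have "sorted (map (grid_cell L) ss)"
    unfolding sorted_map by (rule sorted_wrt_mono_rel[rotated]) (simp add: grid_cell_mono)
  moreover have "set (map (grid_cell L) ss) \<subseteq> {..<L}"
    using times grid_cell_bounds(1) \<open>0 < L\<close> \<open>length ss = L\<close> by (auto simp: in_set_conv_nth)
  ultimately show "map (grid_cell L) ss \<in> sorted_lists L L"
    using \<open>length ss = L\<close> by (simp add: sorted_lists_def)
  show "arrivals_in_cells T L ps (map (grid_cell L) ss) \<omega>"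
    unfolding arrivals_in_cells_def
  proof (intro allI impI)
    fix i assume "i < L"
    then have "ss ! i \<in> arrivals T (ps ! i, ps ! Suc i) \<omega> \<inter>
        {real (grid_cell L (ss ! i)) / L <.. (real (grid_cell L (ss ! i)) + 1) / L}"
      using times grid_cell_bounds(2)[of "ss ! i" L] \<open>0 < L\<close> by simp
    then show "arrivals T (ps ! i, ps ! Suc i) \<omega> \<inter>
        {real (map (grid_cell L) ss ! i) / L <.. (real (map (grid_cell L) ss ! i) + 1) / L} \<noteq> {}"
      using \<open>i < L\<close> \<open>length ss = L\<close> by auto
  qed
qed

lemma escape_imp_arrivals_in_cells:
  assumes "y \<in> infected T (base_segment n) 1 \<omega>" "y \<notin> box n r" "real L \<le> r" "0 < L"
  shows "\<exists>ps \<in> {ps \<in> walks (base_segment n) L. distinct ps}. \<exists>js \<in> sorted_lists L L.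
    arrivals_in_cells T L ps js \<omega>"
proof -
  obtain ps0 ss0 where walk0: "timed_walk (infection_step T 1 \<omega>) ps0 ss0"
    and "hd ps0 \<in> base_segment n" "last ps0 = y"
    using assms(1) unfolding infected_iff_timed_walk by blast
  then obtain ps ss where walk: "timed_walk (infection_step T 1 \<omega>) ps ss"
    and start: "hd ps \<in> base_segment n" and "last ps = y" and "distinct ps"
    using timed_walk_loop_erasure[OF walk0] by auto
  have "L \<le> length ss"
  proof (rule ccontr)
    assume "\<not> L \<le> length ss"
    then have "real (length ss) \<le> r"
      using assms(3) by linarith
    then show False
      using walks_last_in_box[OF timed_walk_infection_step_in_walks[OF walk start]]
        \<open>last ps = y\<close> assms(2) by blast
  qed
  define ps' where "ps' = take (Suc L) ps"
  define ss' where "ss' = take L ss"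
  have walk': "timed_walk (infection_step T 1 \<omega>) ps' ss'"
    unfolding ps'_def ss'_def using walk \<open>L \<le> length ss\<close> by (rule timed_walk_take)
  have "length ss' = L"
    using \<open>L \<le> length ss\<close> by (simp add: ss'_def)
  have "ps' \<in> walks (base_segment n) L" "distinct ps'"
    using timed_walk_infection_step_in_walks[OF walk'] start \<open>length ss' = L\<close> \<open>distinct ps\<close>
    by (simp_all add: ps'_def)
  then show ?thesis
    using timed_walk_arrivals_in_cells[OF walk' \<open>length ss' = L\<close> \<open>0 < L\<close>] by blast
qed

section \<open>Probability of leaving the box\<close>

context
  fixes M :: "'a measure" and T :: "edge \<Rightarrow> nat \<Rightarrow> 'a \<Rightarrow> real"
  assumes processes: "poisson_edge_processes M T"
begin

interpretation prob_space M
  using processes by (simp add: poisson_edge_processes_def)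

lemma pred_timed_walk_arrival_times:
  assumes "\<forall>i<length ks. nn (ps ! i) (ps ! Suc i)"
  shows "Measurable.pred M (\<lambda>\<omega>. timed_walk (infection_step T t \<omega>) ps (walk_arrival_times T ps ks \<omega>))"
proof -
  define I where "I = {..<length ks}"
  define f where "f i \<omega> = (\<Sum>j\<le>ks ! i. T (ps ! i, ps ! Suc i) j \<omega>)" for i \<omega>
  have f: "f i \<in> borel_measurable M" if "i \<in> I" for i
    using that assms borel_measurable_edge_process[OF processes]
    unfolding f_def I_def by (intro borel_measurable_sum) (auto simp: edges_def)
  have "Measurable.pred M (\<lambda>\<omega>. \<forall>i\<in>I. (0 < f i \<omega> \<and> f i \<omega> \<le> t) \<and> (\<forall>j\<in>I. i < j \<longrightarrow> f i \<omega> < f j \<omega>))"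
  proof (intro pred_intros_finite(3) pred_intros_logic(3))
    fix i j assume "i \<in> I" "j \<in> I"
    show "Measurable.pred M (\<lambda>\<omega>. i < j \<longrightarrow> f i \<omega> < f j \<omega>)"
      using f[OF \<open>i \<in> I\<close>] f[OF \<open>j \<in> I\<close>] by measurable
  next
    fix i assume "i \<in> I"
    show "Measurable.pred M (\<lambda>\<omega>. 0 < f i \<omega>)"
      using f[OF \<open>i \<in> I\<close>] by measurable
    show "Measurable.pred M (\<lambda>\<omega>. f i \<omega> \<le> t)"
      using f[OF \<open>i \<in> I\<close>] by measurable
  qed (simp_all add: I_def)
  moreover have "timed_walk (infection_step T t \<omega>) ps (walk_arrival_times T ps ks \<omega>) \<longleftrightarrow>
      length ps = Suc (length ks) \<and>
      (\<forall>i\<in>I. (0 < f i \<omega> \<and> f i \<omega> \<le> t) \<and> (\<forall>j\<in>I. i < j \<longrightarrow> f i \<omega> < f j \<omega>))" for \<omega>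
    using assms
    by (auto simp: timed_walk_def infection_step_def walk_arrival_times_def f_def arrivals_def I_def
        sorted_wrt_iff_nth_less)
  ultimately show ?thesis
    by (cases "length ps = Suc (length ks)") simp_all
qed

lemma sets_infected_not_subset: "{\<omega> \<in> space M. \<not> infected T V t \<omega> \<subseteq> B} \<in> sets M"
proof -
  let ?W = "{ps. hd ps \<in> V \<and> last ps \<notin> B}"
  let ?K = "\<lambda>ps. {ks. \<forall>i<length ks. nn (ps ! i) (ps ! Suc i)}"
  have "\<not> infected T V t \<omega> \<subseteq> B \<longleftrightarrow> (\<exists>ps\<in>?W. \<exists>ss. timed_walk (infection_step T t \<omega>) ps ss)" for \<omega>
    unfolding subset_iff infected_iff_timed_walk by blast
  also have "\<dots> \<omega> \<longleftrightarrow> (\<exists>ps\<in>?W. \<exists>ks. timed_walk (infection_step T t \<omega>) ps (walk_arrival_times T ps ks \<omega>))" for \<omega>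
    by (simp only: ex_timed_walk_iff_arrival_indices)
  also have "\<dots> \<omega> \<longleftrightarrow> (\<exists>ps\<in>?W. \<exists>ks\<in>?K ps. timed_walk (infection_step T t \<omega>) ps (walk_arrival_times T ps ks \<omega>))" for \<omega>
    by (auto simp: timed_walk_def infection_step_def walk_arrival_times_def)
  finally have "{\<omega> \<in> space M. \<not> infected T V t \<omega> \<subseteq> B} = {\<omega> \<in> space M. \<exists>ps\<in>?W. \<exists>ks\<in>?K ps.
      timed_walk (infection_step T t \<omega>) ps (walk_arrival_times T ps ks \<omega>)}"
    by simp
  also have "\<dots> \<in> sets M"
    using pred_timed_walk_arrival_times unfolding pred_def[symmetric]
    by (intro pred_intros_countable_bounded(4)) auto
  finally show ?thesis .
qed

lemma sets_arrivals_in_cells: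
  assumes "ps \<in> walks V L"
  shows "{\<omega> \<in> space M. arrivals_in_cells T L ps js \<omega>} \<in> sets M"
proof -
  have "Measurable.pred M (\<lambda>\<omega>. \<exists>k. (\<Sum>j\<le>k. T (ps ! i, ps ! Suc i) j \<omega>) \<in> {real (js ! i) / L <.. (real (js ! i) + 1) / L})"
    if "i \<in> {..<L}" for i
  proof -
    have "(ps ! i, ps ! Suc i) \<in> edges"
      using assms that by (simp add: walks_def edges_def)
    then have "(\<lambda>\<omega>. \<Sum>j\<le>k. T (ps ! i, ps ! Suc i) j \<omega>) \<in> borel_measurable M" for k
      using borel_measurable_edge_process[OF processes] by (intro borel_measurable_sum) auto
    then show ?thesis
      by (intro pred_intros_countable(2) pred_sets2[where N = borel]) auto
  qed
  then have "Measurable.pred M (\<lambda>\<omega>. \<forall>i\<in>{..<L}. \<exists>k. (\<Sum>j\<le>k. T (ps ! i, ps ! Suc i) j \<omega>) \<in> {real (js ! i) / L <.. (real (js ! i) + 1) / L})"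
    by (rule pred_intros_finite(3)[OF finite_lessThan])
  then show ?thesis
    unfolding pred_def arrivals_in_cells_def arrivals_meet_iff Ball_def lessThan_iff .
qed

lemma prob_arrivals_in_cells_le:
  assumes "ps \<in> walks V L" "snd (hd ps) = 0" "distinct ps" "0 < L"
  shows "prob {\<omega> \<in> space M. arrivals_in_cells T L ps js \<omega>} \<le> (1 / sqrt L) ^ L"
proof -
  have len: "length ps = Suc L" and steps: "\<forall>i<L. nn (ps ! i) (ps ! Suc i)"
    using assms(1) by (simp_all add: walks_def)
  have "prob {\<omega> \<in> space M. arrivals_in_cells T L ps js \<omega>}
      = prob {\<omega> \<in> space M. \<forall>i\<in>{..<L}. arrivals T (ps ! i, ps ! Suc i) \<omega> \<inter> {real (js ! i) / L <.. (real (js ! i) + 1) / L} \<noteq> {}}"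
    unfolding arrivals_in_cells_def Ball_def lessThan_iff ..
  also have "\<dots> \<le> (\<Prod>i<L. rate (fst (ps ! i, ps ! Suc i)) * ((real (js ! i) + 1) / L - real (js ! i) / L))"
    using assms(3) len steps
    by (intro prob_arrivals_in_Ioc_le[OF processes])
      (auto simp: inj_on_def nth_eq_iff_index_eq edges_def divide_right_mono)
  also have "\<dots> \<le> (\<Prod>i<L. sqrt L * (1 / L))"
  proof (rule prod_mono)
    fix i assume "i \<in> {..<L}"
    then have "snd (ps ! i) \<le> int L"
      using walks_nth_dist_le[OF assms(1), of i] assms(2) len by (cases ps) auto
    then have "rate (ps ! i) \<le> sqrt L"
      using \<open>0 < L\<close> by (simp add: rate_def)
    moreover have "(real (js ! i) + 1) / L - real (js ! i) / L = 1 / L"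
      by (simp add: diff_divide_distrib[symmetric])
    ultimately show "0 \<le> rate (fst (ps ! i, ps ! Suc i)) * ((real (js ! i) + 1) / L - real (js ! i) / L) \<and>
        rate (fst (ps ! i, ps ! Suc i)) * ((real (js ! i) + 1) / L - real (js ! i) / L) \<le> sqrt L * (1 / L)"
      using rate_ge_1[of "ps ! i"] by (simp add: divide_right_mono)
  qed
  also have "\<dots> = (1 / sqrt L) ^ L"
    by (simp add: sqrt_divide_self_eq inverse_eq_divide)
  finally show ?thesis .
qed

lemma prob_escape_le:
  assumes "0 < L" "real L \<le> r"
  shows "prob {\<omega> \<in> space M. \<not> infected T (base_segment n) 1 \<omega> \<subseteq> box n r}
    \<le> (2 * real n + 1) * (16 / sqrt L) ^ L"
proof -
  define P where "P = {ps \<in> walks (base_segment n) L. distinct ps} \<times> sorted_lists L L"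
  define A where "A = (\<lambda>(ps, js). {\<omega> \<in> space M. arrivals_in_cells T L ps js \<omega>})"
  have "finite P"
    by (simp add: P_def finite_walks finite_base_segment finite_sorted_lists)
  have A: "A p \<in> sets M" if "p \<in> P" for p
    using that sets_arrivals_in_cells by (auto simp: A_def P_def)
  have "{\<omega> \<in> space M. \<not> infected T (base_segment n) 1 \<omega> \<subseteq> box n r} \<subseteq> (\<Union>p\<in>P. A p)"
    using escape_imp_arrivals_in_cells[OF _ _ assms(2,1)] by (fastforce simp: A_def P_def)
  then have "prob {\<omega> \<in> space M. \<not> infected T (base_segment n) 1 \<omega> \<subseteq> box n r} \<le> prob (\<Union>p\<in>P. A p)"
    using \<open>finite P\<close> A by (intro finite_measure_mono) auto
  also have "\<dots> \<le> (\<Sum>p\<in>P. prob (A p))"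
    using \<open>finite P\<close> A by (rule measure_UNION_le)
  also have "\<dots> \<le> card P * (1 / sqrt L) ^ L"
  proof (rule sum_bounded_above)
    fix p assume "p \<in> P"
    moreover have "snd (hd ps) = 0" if "ps \<in> walks (base_segment n) L" for ps
      using that by (auto simp: walks_def base_segment_def)
    ultimately show "prob (A p) \<le> (1 / sqrt L) ^ L"
      using prob_arrivals_in_cells_le \<open>0 < L\<close> by (auto simp: A_def P_def)
  qed
  also have "\<dots> \<le> ((2 * n + 1) * 16 ^ L) * (1 / sqrt L) ^ L"
  proof -
    have "card {ps \<in> walks (base_segment n) L. distinct ps} \<le> card (walks (base_segment n) L)"
      by (intro card_mono finite_walks finite_base_segment) auto
    also have "\<dots> \<le> (2 * n + 1) * 4 ^ L"
      using card_walks_le[OF finite_base_segment] by (simp add: card_base_segment)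
    finally have "card P \<le> (2 * n + 1) * 4 ^ L * 2 ^ (L + L)"
      unfolding P_def card_cartesian_product using card_sorted_lists_le[of L L] by (intro mult_le_mono) auto
    also have "\<dots> = (2 * n + 1) * 16 ^ L"
    proof -
      have "(2::nat) ^ (L + L) = 4 ^ L" "(4::nat) ^ L * 4 ^ L = 16 ^ L"
        by (simp_all add: power_add flip: power_mult_distrib)
      then show ?thesis
        by (simp only: mult.assoc)
    qed
    finally show ?thesis
      by (intro mult_right_mono) (simp_all only: of_nat_le_iff, simp)
  qed
  also have "\<dots> = (2 * real n + 1) * (16 / sqrt L) ^ L"
    using \<open>0 < L\<close> by (simp add: power_divide field_simps)
  finally show ?thesis .
qed

end

section \<open>Asymptotics\<close>

lemma sqrt_power_decay_le:
  fixes D x :: real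
  assumes "0 \<le> D" "(16 * exp D)\<^sup>2 \<le> real L" "x - 1 \<le> real L"
  shows "(16 / sqrt L) ^ L \<le> exp D * exp (- D * x)"
proof -
  have "16 * exp D \<le> sqrt L"
    using real_le_rsqrt[OF assms(2)] .
  then have "16 / sqrt L \<le> exp (- D)"
    by (simp add: divide_le_eq exp_minus field_simps)
  then have "(16 / sqrt L) ^ L \<le> exp (- D) ^ L"
    by (intro power_mono) simp_all
  also have "\<dots> = exp (- D * real L)"
    by (simp add: exp_of_nat_mult[symmetric] mult.commute)
  also have "\<dots> \<le> exp (- D * (x - 1))"
    using assms by (intro exp_mono) (simp add: mult_left_mono)
  also have "\<dots> = exp D * exp (- D * x)"
    by (simp add: algebra_simps flip: exp_add)
  finally show ?thesis .
qed

lemma eventually_escape_bound_less: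
  fixes C :: real
  shows "\<forall>\<^sub>F n in sequentially. 1 \<le> ln (real n) \<and>
    (2 * real n + 1) * (16 / sqrt (nat \<lfloor>ln (real n)\<rfloor>)) ^ nat \<lfloor>ln (real n)\<rfloor> < 1 / real n powr C"
proof -
  \<comment> \<open>\<open>D \<ge> C + 2\<close> leaves a factor \<open>n\<^sup>-\<^sup>2\<close> to absorb \<open>2 n + 1\<close>\<close>
  define D where "D = max C 0 + 2"
  define K where "K = (16 * exp D)\<^sup>2"
  have "filterlim (\<lambda>n. ln (real n)) at_top sequentially"
    by (rule filterlim_compose[OF ln_at_top filterlim_real_sequentially])
  then have "\<forall>\<^sub>F n in sequentially. K + 1 \<le> ln (real n)"
    by (simp add: filterlim_at_top)
  moreover have "\<forall>\<^sub>F n in sequentially. (2 * real n + 1) * exp D < real n ^ 2"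
    by real_asymp
  ultimately show ?thesis
  proof eventually_elim
    case (elim n)
    define L where "L = nat \<lfloor>ln (real n)\<rfloor>"
    have "0 \<le> K" "0 \<le> D"
      by (simp_all add: K_def D_def)
    then have "1 \<le> ln (real n)"
      using elim(1) by simp
    then have "0 < real n"
      by (cases n) auto
    have "K \<le> real L" "ln (real n) - 1 \<le> real L"
      using elim(1) \<open>0 \<le> K\<close> unfolding L_def by linarith+
    then have "(16 / sqrt L) ^ L \<le> exp D * real n powr (- D)"
      using sqrt_power_decay_le[of D L "ln (real n)"] \<open>0 \<le> D\<close> \<open>0 < real n\<close>
      by (simp add: K_def powr_def)
    then have "(2 * real n + 1) * (16 / sqrt L) ^ L \<le> (2 * real n + 1) * exp D * real n powr (- D)"
      by (simp add: mult_left_mono mult.assoc)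
    also have "\<dots> \<le> (2 * real n + 1) * exp D * (real n powr (- C) / real n ^ 2)"
    proof -
      have "real n powr (- D) \<le> real n powr (- C - 2)"
        using \<open>1 \<le> ln (real n)\<close> \<open>0 < real n\<close> by (intro powr_mono) (auto simp: D_def ln_ge_zero_iff)
      also have "\<dots> = real n powr (- C) / real n ^ 2"
        using \<open>0 < real n\<close> by (simp add: powr_diff powr_realpow)
      finally show ?thesis
        by (rule mult_left_mono) simp
    qed
    also have "\<dots> = ((2 * real n + 1) * exp D / real n ^ 2) * real n powr (- C)"
      by simp
    also have "\<dots> < 1 * real n powr (- C)"
      using elim(2) \<open>0 < real n\<close> by (intro mult_strict_right_mono) (simp_all add: divide_less_eq)
    finally show ?case
      using \<open>1 \<le> ln (real n)\<close> by (simp add: L_def powr_minus divide_inverse)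
  qed
qed

theorem mainTheorem4:
  fixes M :: "'a measure" and T :: "edge \<Rightarrow> nat \<Rightarrow> 'a \<Rightarrow> real" and C :: real
  assumes "poisson_edge_processes M T"
  shows "\<forall>\<^sub>F n in sequentially.
    {\<omega> \<in> space M. \<not> infected T {(a, 0) | a. - int n \<le> a \<and> a \<le> int n} 1 \<omega>
        \<subseteq> {(a, b). - real n - ln (real n) \<le> real_of_int a \<and> real_of_int a \<le> real n + ln (real n)
                    \<and> 0 \<le> real_of_int b \<and> real_of_int b \<le> ln (real n)}} \<in> sets M
    \<and> measure M {\<omega> \<in> space M. \<not> infected T {(a, 0) | a. - int n \<le> a \<and> a \<le> int n} 1 \<omega>
        \<subseteq> {(a, b). - real n - ln (real n) \<le> real_of_int a \<and> real_of_int a \<le> real n + ln (real n)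
                    \<and> 0 \<le> real_of_int b \<and> real_of_int b \<le> ln (real n)}}
      < 1 / real n powr C"
  using eventually_escape_bound_less[of C]
proof eventually_elim
  case (elim n)
  define L where "L = nat \<lfloor>ln (real n)\<rfloor>"
  have "0 < L" "real L \<le> ln (real n)"
    using elim unfolding L_def by linarith+
  then have "measure M {\<omega> \<in> space M. \<not> infected T (base_segment n) 1 \<omega> \<subseteq> box n (ln (real n))}
      < 1 / real n powr C"
    using prob_escape_le[OF assms] elim unfolding L_def by (meson order.strict_trans1)
  then show ?case
    using sets_infected_not_subset[OF assms] unfolding base_segment_def box_def by simp
qed

end
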